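(* The topological conjugacy relation of minimal rotations on the $2$-torus is not amenable. That is, letting $X=\{(\alpha,\beta)\in(\mathbb{R}/\mathbb{Z})^2 : \alpha,\beta,1 \text{ are rationally independent}\}$ and $E$ the equivalence relation on $X$ given by $(\alpha,\beta)\,E\,(\alpha',\beta')$ iff the rotations $T_{\alpha,\beta}$ and $T_{\alpha',\beta'}$ are topologically conjugate, the countable Borel equivalence relation $E$ is not amenable.
   Context: For $(\alpha,\beta)\in(\mathbb{R}/\mathbb{Z})^2$, the rotation $T_{\alpha,\beta}$ of the torus $(\mathbb{R}/\mathbb{Z})^2$ is $T_{\alpha,\beta}(x,y)=(x+\alpha,y+\beta)$; it is minimal exactly when $\alpha,\beta,1$ are rationally independent. Two homeomorphisms $f,g$ of the torus are topologically conjugate if $h\circ f=g\circ h$ for some homeomorphism $h$ of the torus. A countable Borel equivalence relation $E$ on a standard Borel space $X$ is $\mu$-amenable, for a Borel probability measure $\mu$ on $X$, if there are Borel functions $\phi_n:E\to\mathbb{R}_{\ge 0}$ such that (1) for every $x\in X$, $\sum_{y E x}\phi_n(x,y)=1$, and (2) there is a Borel $E$-invariant set $A\subseteq X$ with $\mu(A)=1$ such that for all $(x,x')\in E\cap(A\times A)$, $\sum_{yEx}|\phi_n(x,y)-\phi_n(x',y)|\to 0$ as $n\to\infty$. $E$ is amenable if it is $\mu$-amenable for every Borel probability measure $\mu$ on $X$. *)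

theory Defs
  imports "HOL-Probability.Probability"
begin

text \<open>The torus (R/Z)^2 is realised as the product of two unit circles in the complex plane,
  via (x,y) |-> (exp(2 pi i x), exp(2 pi i y)).\<close>

definition torus2 :: "(complex \<times> complex) set" where
  "torus2 = sphere 0 1 \<times> sphere 0 1"

definition rot2 :: "real \<Rightarrow> real \<Rightarrow> complex \<times> complex \<Rightarrow> complex \<times> complex" where
  "rot2 \<alpha> \<beta> = (\<lambda>(z, w). (cis (2 * pi * \<alpha>) * z, cis (2 * pi * \<beta>) * w))"

definition top_conjugate_torus ::
  "(complex \<times> complex \<Rightarrow> complex \<times> complex) \<Rightarrow> (complex \<times> complex \<Rightarrow> complex \<times> complex) \<Rightarrow> bool" where
  "top_conjugate_torus f g \<longleftrightarrow>
     (\<exists>h k. homeomorphism torus2 torus2 h k \<and> (\<forall>p\<in>torus2. h (f p) = g (h p)))"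

definition rat_indep3 :: "real \<Rightarrow> real \<Rightarrow> real \<Rightarrow> bool" where
  "rat_indep3 a b c \<longleftrightarrow>
     (\<forall>p q r. p \<in> \<rat> \<and> q \<in> \<rat> \<and> r \<in> \<rat> \<and> p * a + q * b + r * c = 0 \<longrightarrow> p = 0 \<and> q = 0 \<and> r = 0)"

text \<open>Elements of R/Z are represented by their unique representative in [0,1).\<close>

definition minrot_params :: "(real \<times> real) set" where
  "minrot_params = {(\<alpha>, \<beta>). \<alpha> \<in> {0..<1} \<and> \<beta> \<in> {0..<1} \<and> rat_indep3 \<alpha> \<beta> 1}"

definition minrot_space :: "(real \<times> real) measure" where
  "minrot_space = restrict_space borel minrot_params"

definition minrot_conj :: "((real \<times> real) \<times> (real \<times> real)) set" where
  "minrot_conj = {((\<alpha>, \<beta>), (\<alpha>', \<beta>')). (\<alpha>, \<beta>) \<in> minrot_params \<and> (\<alpha>', \<beta>') \<in> minrot_params \<and>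
                    top_conjugate_torus (rot2 \<alpha> \<beta>) (rot2 \<alpha>' \<beta>')}"

definition mu_amenable :: "'a measure \<Rightarrow> ('a \<times> 'a) set \<Rightarrow> 'a measure \<Rightarrow> bool" where
  "mu_amenable Xs E \<mu> \<longleftrightarrow>
     (\<exists>\<phi> :: nat \<Rightarrow> 'a \<times> 'a \<Rightarrow> real.
        (\<forall>n. \<phi> n \<in> borel_measurable (restrict_space (Xs \<Otimes>\<^sub>M Xs) E)) \<and>
        (\<forall>n p. p \<in> E \<longrightarrow> 0 \<le> \<phi> n p) \<and>
        (\<forall>n. \<forall>x\<in>space Xs. ((\<lambda>y. \<phi> n (x, y)) has_sum 1) {y. (x, y) \<in> E}) \<and>
        (\<exists>A \<in> sets Xs. (\<forall>x y. (x, y) \<in> E \<longrightarrow> (x \<in> A \<longleftrightarrow> y \<in> A)) \<and>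
           emeasure \<mu> A = 1 \<and>
           (\<forall>x x'. (x, x') \<in> E \<and> x \<in> A \<and> x' \<in> A \<longrightarrow>
              (\<lambda>n. infsum (\<lambda>y. \<bar>\<phi> n (x, y) - \<phi> n (x', y)\<bar>) {y. (x, y) \<in> E}) \<longlonglongrightarrow> 0)))"

definition amenable_rel :: "'a measure \<Rightarrow> ('a \<times> 'a) set \<Rightarrow> bool" where
  "amenable_rel Xs E \<longleftrightarrow>
     (\<forall>\<mu>. sets \<mu> = sets Xs \<and> prob_space \<mu> \<longrightarrow> mu_amenable Xs E \<mu>)"

end

theory Submission
  imports Defs
begin

text \<open>GL2Z acts on the parameters by x \<mapsto> M x mod Z^2, and M induces a toral automorphism
  conjugating the rotation by x to the rotation by M x. Conversely, a conjugating homeomorphism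
  composed with a coordinate is a continuous eigenfunction of the rotation by x; lifting it to
  R^2 shows that its eigenvalue lies in Z x_1 + Z x_2 + Z, so conjugacy classes are exactly the
  orbits of this free action. Lebesgue measure on the parameter space is invariant under the
  shears, so the Reiter functions of an amenability witness average to means on the first rows
  of GL2Z that are asymptotically invariant under right multiplication by two shears. A ping-pong
  decomposition of the primitive vectors of Z^2 shows that no such mean exists.\<close>

type_synonym imat = "int \<times> int \<times> int \<times> int"

text \<open>The quadruple (a, b, c, d) is the matrix with rows (a, b) and (c, d).\<close>

definition mat_mult :: "imat \<Rightarrow> imat \<Rightarrow> imat" where
  "mat_mult M N = (case M of (a,b,c,d) \<Rightarrow> case N of (a',b',c',d') \<Rightarrow>
     (a*a' + b*c', a*b' + b*d', c*a' + d*c', c*b' + d*d'))"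

definition mat_det :: "imat \<Rightarrow> int" where
  "mat_det M = (case M of (a,b,c,d) \<Rightarrow> a*d - b*c)"

definition mat_inv :: "imat \<Rightarrow> imat" where
  "mat_inv M = (case M of (a,b,c,d) \<Rightarrow> (mat_det M * d, - mat_det M * b, - mat_det M * c, mat_det M * a))"

definition GL2Z :: "imat set" where
  "GL2Z = {M. mat_det M = 1 \<or> mat_det M = -1}"

abbreviation mat_1 :: imat where
  "mat_1 \<equiv> (1, 0, 0, 1)"

abbreviation unit_square :: "(real \<times> real) set" where
  "unit_square \<equiv> {0..<1} \<times> {0..<1}"

definition torus_act :: "imat \<Rightarrow> real \<times> real \<Rightarrow> real \<times> real" where
  "torus_act M x = (case M of (a,b,c,d) \<Rightarrow>
     (frac (of_int a * fst x + of_int b * snd x), frac (of_int c * fst x + of_int d * snd x)))"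

lemma mat_mult_assoc: "mat_mult (mat_mult A B) C = mat_mult A (mat_mult B C)"
  by (cases A; cases B; cases C) (simp add: mat_mult_def algebra_simps)

lemma mat_mult_1_right [simp]: "mat_mult M mat_1 = M"
  by (cases M) (simp add: mat_mult_def)

lemma mat_det_mult: "mat_det (mat_mult M N) = mat_det M * mat_det N"
  by (cases M; cases N) (simp add: mat_det_def mat_mult_def algebra_simps)

lemma GL2Z_iff_det_square: "M \<in> GL2Z \<longleftrightarrow> mat_det M * mat_det M = 1"
  by (auto simp: GL2Z_def zmult_eq_1_iff)

lemma mat_1_GL2Z: "mat_1 \<in> GL2Z"
  by (simp add: GL2Z_def mat_det_def)

lemma GL2Z_mult: "M \<in> GL2Z \<Longrightarrow> N \<in> GL2Z \<Longrightarrow> mat_mult M N \<in> GL2Z"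
  by (auto simp: GL2Z_def mat_det_mult)

lemma mat_mult_inv_right: "M \<in> GL2Z \<Longrightarrow> mat_mult M (mat_inv M) = mat_1"
  and mat_mult_inv_left: "M \<in> GL2Z \<Longrightarrow> mat_mult (mat_inv M) M = mat_1"
  by (cases M, simp add: GL2Z_iff_det_square mat_mult_def mat_inv_def mat_det_def algebra_simps)+

lemma mat_det_inv: "mat_det (mat_inv M) = mat_det M ^ 3"
  by (cases M) (simp add: mat_inv_def mat_det_def power3_eq_cube algebra_simps)

lemma GL2Z_inv: "M \<in> GL2Z \<Longrightarrow> mat_inv M \<in> GL2Z"
  by (auto simp: GL2Z_def mat_det_inv)

lemma mat_det_eq_1_imp_GL2Z: "mat_det (mat_mult N M) = 1 \<Longrightarrow> M \<in> GL2Z"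
  by (auto simp: GL2Z_def mat_det_mult zmult_eq_1_iff)

lemma bij_betw_mat_mult_right:
  assumes "G \<in> GL2Z"
  shows "bij_betw (\<lambda>N. mat_mult N G) GL2Z GL2Z"
proof (rule bij_betwI[where g = "\<lambda>M. mat_mult M (mat_inv G)"])
  show "(\<lambda>N. mat_mult N G) \<in> GL2Z \<rightarrow> GL2Z" "(\<lambda>M. mat_mult M (mat_inv G)) \<in> GL2Z \<rightarrow> GL2Z"
    using assms by (auto intro: GL2Z_mult GL2Z_inv)
qed (use assms in \<open>simp_all add: mat_mult_assoc mat_mult_inv_left mat_mult_inv_right\<close>)

lemma countable_GL2Z: "countable GL2Z"
  by (rule countable_subset[OF subset_UNIV]) simp

lemma torus_act_mult: "torus_act (mat_mult M N) x = torus_act M (torus_act N x)"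
proof -
  obtain a b c d where M: "M = (a,b,c,d)" by (cases M) auto
  obtain a' b' c' d' where N: "N = (a',b',c',d')" by (cases N) auto
  obtain u v where x: "x = (u,v)" by (cases x) auto
  define p where "p = of_int a' * u + of_int b' * v"
  define q where "q = of_int c' * u + of_int d' * v"
  have "frac (of_int (k*a' + l*c') * u + of_int (k*b' + l*d') * v)
      = frac (of_int k * frac p + of_int l * frac q)" for k l
  proof -
    have "of_int (k*a' + l*c') * u + of_int (k*b' + l*d') * v
        = (of_int k * frac p + of_int l * frac q) + of_int (k * \<lfloor>p\<rfloor> + l * \<lfloor>q\<rfloor>)"
      by (simp add: frac_def p_def q_def algebra_simps)
    then show ?thesis by (simp only: frac_add_of_int_right)
  qed
  then show ?thesis
    by (simp add: torus_act_def mat_mult_def M N x p_def q_def)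
qed

lemma torus_act_1: "x \<in> unit_square \<Longrightarrow> torus_act mat_1 x = x"
  by (cases x) (auto simp: torus_act_def)

lemma torus_act_in_unit_square: "torus_act M x \<in> unit_square"
  by (cases M) (simp add: torus_act_def frac_lt_1)

lemma borel_measurable_torus_act [measurable]: "torus_act M \<in> borel_measurable borel"
proof -
  obtain a b c d where M: "M = (a,b,c,d)" by (cases M) auto
  have "(\<lambda>x::real \<times> real. (frac (of_int a * fst x + of_int b * snd x),
      frac (of_int c * fst x + of_int d * snd x))) \<in> borel_measurable (borel \<Otimes>\<^sub>M borel)"
    unfolding frac_def by measurable
  moreover have "torus_act M = (\<lambda>x. (frac (of_int a * fst x + of_int b * snd x),
      frac (of_int c * fst x + of_int d * snd x)))"
    by (simp add: torus_act_def M fun_eq_iff)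
  ultimately show ?thesis
    by (simp add: borel_prod)
qed

lemma rat_indep3_1D:
  assumes "rat_indep3 u v 1" "p \<in> \<rat>" "q \<in> \<rat>" "r \<in> \<rat>" "p * u + q * v + r = 0"
  shows "p = 0 \<and> q = 0 \<and> r = 0"
  using assms unfolding rat_indep3_def by (metis mult.right_neutral)

lemma rat_indep3_int_combination:
  assumes "rat_indep3 u v 1" "of_int p * u + of_int q * v + of_int r = 0"
  shows "p = 0 \<and> q = 0 \<and> r = 0"
  using rat_indep3_1D[OF assms(1) Rats_of_int Rats_of_int Rats_of_int assms(2)] by simp

lemma rat_indep3_affine_image:
  fixes a b c d k l :: int
  assumes indep: "rat_indep3 u v 1" and det: "a * d - b * c \<noteq> 0"
  shows "rat_indep3 (of_int a * u + of_int b * v + of_int k) (of_int c * u + of_int d * v + of_int l) 1"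
  unfolding rat_indep3_def
proof (intro allI impI)
  fix p q r :: real
  assume h: "p \<in> \<rat> \<and> q \<in> \<rat> \<and> r \<in> \<rat> \<and>
    p * (of_int a * u + of_int b * v + of_int k) + q * (of_int c * u + of_int d * v + of_int l) + r * 1 = 0"
  have "(p * of_int a + q * of_int c) * u + (p * of_int b + q * of_int d) * v
      + (p * of_int k + q * of_int l + r) = 0"
    using h by (simp add: algebra_simps)
  moreover have "p * of_int a + q * of_int c \<in> \<rat>" "p * of_int b + q * of_int d \<in> \<rat>"
      "p * of_int k + q * of_int l + r \<in> \<rat>"
    using h by (auto intro!: Rats_add Rats_mult simp: Rats_of_int)
  ultimately have z: "p * of_int a + q * of_int c = 0" "p * of_int b + q * of_int d = 0"
      "p * of_int k + q * of_int l + r = 0"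
    using rat_indep3_1D[OF indep] by blast+
  have det': "(of_int (a * d - b * c) :: real) \<noteq> 0"
    by (metis det of_int_eq_0_iff)
  have "p * of_int (a * d - b * c) = of_int d * (p * of_int a + q * of_int c) - of_int c * (p * of_int b + q * of_int d)"
    and "q * of_int (a * d - b * c) = of_int a * (p * of_int b + q * of_int d) - of_int b * (p * of_int a + q * of_int c)"
    by (simp_all add: algebra_simps)
  then have "p = 0" "q = 0"
    using z det' by simp_all
  then show "p = 0 \<and> q = 0 \<and> r = 0"
    using z(3) by simp
qed

lemma minrot_params_iff: "(u, v) \<in> minrot_params \<longleftrightarrow> (u, v) \<in> unit_square \<and> rat_indep3 u v 1"
  by (simp add: minrot_params_def)

lemma minrot_params_subset: "minrot_params \<subseteq> unit_square"
  by (auto simp: minrot_params_def)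

lemma minrot_params_torus_act:
  assumes x: "x \<in> minrot_params" and M: "M \<in> GL2Z"
  shows "torus_act M x \<in> minrot_params"
proof -
  obtain a b c d where MM: "M = (a,b,c,d)" by (cases M) auto
  obtain u v where xx: "x = (u,v)" by (cases x) auto
  define s where "s = of_int a * u + of_int b * v"
  define t where "t = of_int c * u + of_int d * v"
  have fs: "frac s = of_int a * u + of_int b * v + of_int (- \<lfloor>s\<rfloor>)"
    and ft: "frac t = of_int c * u + of_int d * v + of_int (- \<lfloor>t\<rfloor>)"
    by (simp_all add: frac_def s_def t_def)
  have "a * d - b * c \<noteq> 0"
    using M by (auto simp: GL2Z_def mat_det_def MM)
  then have "rat_indep3 (frac s) (frac t) 1"
    unfolding fs ft using x by (intro rat_indep3_affine_image) (simp_all add: xx minrot_params_iff)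
  then show ?thesis
    using torus_act_in_unit_square[of M x]
    by (simp add: torus_act_def MM xx s_def t_def minrot_params_iff)
qed

lemma torus_act_eq_imp_eq:
  assumes x: "x \<in> minrot_params" and eq: "torus_act M x = torus_act N x"
  shows "M = N"
proof -
  obtain a b c d where M: "M = (a,b,c,d)" by (cases M) auto
  obtain a' b' c' d' where N: "N = (a',b',c',d')" by (cases N) auto
  obtain u v where xx: "x = (u,v)" by (cases x) auto
  have indep: "rat_indep3 u v 1"
    using x by (simp add: xx minrot_params_iff)
  have "frac (of_int a * u + of_int b * v) = frac (of_int a' * u + of_int b' * v)"
    and "frac (of_int c * u + of_int d * v) = frac (of_int c' * u + of_int d' * v)"
    using eq by (simp_all add: torus_act_def M N xx)
  then obtain k l where "of_int a * u + of_int b * v = of_int a' * u + of_int b' * v + of_int k"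
    and "of_int c * u + of_int d * v = of_int c' * u + of_int d' * v + of_int l"
    by (metis frac_eqE)
  then have "of_int (a - a') * u + of_int (b - b') * v + of_int (- k) = 0"
    and "of_int (c - c') * u + of_int (d - d') * v + of_int (- l) = 0"
    by (simp_all add: algebra_simps)
  from this[THEN rat_indep3_int_combination[OF indep]] show ?thesis
    by (simp add: M N)
qed

lemma inj_on_torus_act: "x \<in> minrot_params \<Longrightarrow> inj_on (\<lambda>M. torus_act M x) A"
  by (auto intro: inj_onI torus_act_eq_imp_eq)

section \<open>Toral automorphisms conjugate rotations along the action\<close>

definition torus_aut :: "imat \<Rightarrow> complex \<times> complex \<Rightarrow> complex \<times> complex" where
  "torus_aut M p = (case M of (a,b,c,d) \<Rightarrow>
     (fst p powi a * snd p powi b, fst p powi c * snd p powi d))"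

lemma torus2_iff: "p \<in> torus2 \<longleftrightarrow> norm (fst p) = 1 \<and> norm (snd p) = 1"
  by (cases p) (auto simp: torus2_def)

lemma rot2_apply: "rot2 a b p = (cis (2 * pi * a) * fst p, cis (2 * pi * b) * snd p)"
  by (cases p) (simp add: rot2_def)

lemma rot2_in_torus2: "p \<in> torus2 \<Longrightarrow> rot2 a b p \<in> torus2"
  by (simp add: rot2_apply torus2_iff norm_mult)

lemma torus_aut_in_torus2: "p \<in> torus2 \<Longrightarrow> torus_aut M p \<in> torus2"
  by (cases M) (auto simp: torus_aut_def torus2_iff norm_mult norm_power_int)

lemma continuous_on_torus_aut: "continuous_on torus2 (torus_aut M)"
proof -
  obtain a b c d where M: "M = (a,b,c,d)" by (cases M) auto
  have "\<forall>p\<in>torus2. fst p \<noteq> 0" "\<forall>p\<in>torus2. snd p \<noteq> 0"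
    by (auto simp: torus2_iff)
  then have "continuous_on torus2 (\<lambda>p. (fst p powi a * snd p powi b, fst p powi c * snd p powi d))"
    by (auto intro!: continuous_intros continuous_on_power_int)
  then show ?thesis
    by (simp add: torus_aut_def M)
qed

lemma torus_aut_mult:
  assumes "p \<in> torus2"
  shows "torus_aut N (torus_aut M p) = torus_aut (mat_mult N M) p"
proof -
  obtain a b c d where M: "M = (a,b,c,d)" by (cases M) auto
  obtain a' b' c' d' where N: "N = (a',b',c',d')" by (cases N) auto
  obtain z w where p: "p = (z,w)" by (cases p) auto
  have "z \<noteq> 0" "w \<noteq> 0"
    using assms by (auto simp: p torus2_iff)
  then have "(z powi a * w powi b) powi k * (z powi c * w powi d) powi l
      = z powi (a*k + c*l) * w powi (b*k + d*l)" for k l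
    by (simp add: power_int_mult_distrib power_int_mult[symmetric] power_int_add algebra_simps)
  then show ?thesis
    by (simp add: torus_aut_def M N p mat_mult_def algebra_simps)
qed

lemma torus_aut_1: "torus_aut mat_1 p = p"
  by (cases p) (simp add: torus_aut_def)

lemma homeomorphism_torus_aut:
  assumes "M \<in> GL2Z"
  shows "homeomorphism torus2 torus2 (torus_aut M) (torus_aut (mat_inv M))"
proof (rule homeomorphismI)
  show "continuous_on torus2 (torus_aut M)" "continuous_on torus2 (torus_aut (mat_inv M))"
    by (rule continuous_on_torus_aut)+
  show "torus_aut M ` torus2 \<subseteq> torus2" "torus_aut (mat_inv M) ` torus2 \<subseteq> torus2"
    by (auto intro: torus_aut_in_torus2)
qed (use assms in \<open>simp_all add: torus_aut_mult mat_mult_inv_left mat_mult_inv_right torus_aut_1\<close>)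

lemma cis_2pi_frac: "cis (2 * pi * frac t) = cis (2 * pi * t)"
proof -
  have "cis (2 * pi * t) = cis (2 * pi * frac t) * cis (2 * pi * of_int \<lfloor>t\<rfloor>)"
    by (subst cis_mult) (simp add: frac_def algebra_simps)
  then show ?thesis
    by (simp add: cis_multiple_2pi)
qed

lemma torus_aut_rot2:
  assumes "p \<in> torus2"
  shows "torus_aut M (rot2 (fst x) (snd x) p) = rot2 (fst (torus_act M x)) (snd (torus_act M x)) (torus_aut M p)"
proof -
  obtain a b c d where M: "M = (a,b,c,d)" by (cases M) auto
  obtain u v where x: "x = (u,v)" by (cases x) auto
  have "(cis (2 * pi * u) * z) powi k * (cis (2 * pi * v) * w) powi l
      = cis (2 * pi * frac (of_int k * u + of_int l * v)) * (z powi k * w powi l)" for k l and z w :: complex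
  proof -
    have "(cis (2 * pi * u) * z) powi k * (cis (2 * pi * v) * w) powi l
        = (cis (of_int k * (2 * pi * u)) * cis (of_int l * (2 * pi * v))) * (z powi k * w powi l)"
      by (simp add: power_int_mult_distrib cis_power_int algebra_simps)
    also have "cis (of_int k * (2 * pi * u)) * cis (of_int l * (2 * pi * v))
        = cis (2 * pi * (of_int k * u + of_int l * v))"
      by (simp add: cis_mult algebra_simps)
    finally show ?thesis
      by (simp add: cis_2pi_frac)
  qed
  then show ?thesis
    by (simp add: torus_aut_def M x rot2_apply torus_act_def)
qed

lemma minrot_conj_iff:
  "(x, y) \<in> minrot_conj \<longleftrightarrow> x \<in> minrot_params \<and> y \<in> minrot_params \<and>
     top_conjugate_torus (rot2 (fst x) (snd x)) (rot2 (fst y) (snd y))"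
  by (cases x; cases y) (simp add: minrot_conj_def)

lemma minrot_conj_torus_act:
  assumes "x \<in> minrot_params" "M \<in> GL2Z"
  shows "(x, torus_act M x) \<in> minrot_conj"
proof -
  have "top_conjugate_torus (rot2 (fst x) (snd x)) (rot2 (fst (torus_act M x)) (snd (torus_act M x)))"
    unfolding top_conjugate_torus_def using homeomorphism_torus_aut[OF assms(2)] torus_aut_rot2 by blast
  then show ?thesis
    using assms minrot_params_torus_act by (simp add: minrot_conj_iff)
qed

section \<open>Conjugate minimal rotations lie in one orbit\<close>

lemma continuous_Ints_valued_constant_on:
  fixes D :: "'a::topological_space \<Rightarrow> real"
  assumes "connected S" "continuous_on S D" "\<And>p. p \<in> S \<Longrightarrow> D p \<in> \<int>"
  shows "D constant_on S"
proof (rule continuous_discrete_range_constant[OF assms(1,2)])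
  fix x assume "x \<in> S"
  show "\<exists>e>0. \<forall>y. y \<in> S \<and> D y \<noteq> D x \<longrightarrow> e \<le> norm (D y - D x)"
  proof (intro exI[of _ 1] conjI allI impI)
    fix y assume y: "y \<in> S \<and> D y \<noteq> D x"
    have "D y - D x \<in> \<int>"
      using assms(3) y \<open>x \<in> S\<close> by (simp add: Ints_diff)
    then obtain z where z: "D y - D x = of_int z"
      by (auto elim: Ints_cases)
    with y have "1 \<le> \<bar>z\<bar>"
      by auto
    then show "1 \<le> norm (D y - D x)"
      by (metis of_int_1_le_iff of_int_abs real_norm_def z)
  qed simp
qed

lemma continuous_angle_shift:
  fixes g :: "'a::real_normed_vector \<Rightarrow> real"
  assumes cont: "continuous_on UNIV g"
    and shift: "\<And>p. exp (\<i> * of_real (g (p + e))) = exp (\<i> * of_real c) * exp (\<i> * of_real (g p))"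
  obtains k :: int where "\<And>p. g (p + e) - g p - c = 2 * pi * of_int k"
proof -
  define D where "D p = (g (p + e) - g p - c) / (2 * pi)" for p
  have "continuous_on UNIV D"
    unfolding D_def by (intro continuous_intros continuous_on_compose2[OF cont]) auto
  moreover have "D p \<in> \<int>" for p
  proof -
    have "exp (\<i> * of_real (g (p + e) - g p - c))
        = exp (\<i> * of_real (g (p + e))) / (exp (\<i> * of_real c) * exp (\<i> * of_real (g p)))"
      by (simp add: exp_diff[symmetric] exp_add[symmetric] algebra_simps)
    then have "exp (\<i> * of_real (g (p + e) - g p - c)) = 1"
      using shift[of p] by simp
    then obtain n :: int where "g (p + e) - g p - c = of_int (2 * n) * pi"
      by (auto simp: exp_eq_1)
    then show ?thesis
      by (simp add: D_def)
  qed
  ultimately have "D constant_on UNIV"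
    by (intro continuous_Ints_valued_constant_on) auto
  then obtain k where "\<And>p. D p = of_int k"
    using \<open>D 0 \<in> \<int>\<close> by (metis Ints_cases UNIV_I constant_on_def)
  then show thesis
    by (intro that[of k]) (simp add: D_def field_simps)
qed

lemma periodic_add_int_multiple:
  fixes h :: "'a::real_vector \<Rightarrow> 'b"
  assumes per: "\<And>p. h (p + e) = h p"
  shows "h (p + of_int n *\<^sub>R e) = h p"
proof (induction n rule: int_induct[where k = 0])
  case (step1 i)
  then show ?case
    using per[of "p + of_int i *\<^sub>R e"] by (simp add: algebra_simps)
next
  case (step2 i)
  then show ?case
    using per[of "p + of_int (i - 1) *\<^sub>R e"] by (simp add: algebra_simps)
qed simp

lemma bounded_range_doubly_periodic:
  fixes h :: "real \<times> real \<Rightarrow> real"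
  assumes cont: "continuous_on UNIV h"
    and per1: "\<And>p. h (p + (1, 0)) = h p" and per2: "\<And>p. h (p + (0, 1)) = h p"
  shows "bounded (range h)"
proof -
  have reduce: "h p = h (frac (fst p), frac (snd p))" for p
  proof -
    obtain s t where p: "p = (s, t)" by (cases p) auto
    have "h (s, t) = h (s, frac t)"
      using periodic_add_int_multiple[of h "(0, 1)", OF per2, of "(s, frac t)" "\<lfloor>t\<rfloor>"]
      by (simp add: frac_def)
    also have "\<dots> = h (frac s, frac t)"
      using periodic_add_int_multiple[of h "(1, 0)", OF per1, of "(frac s, frac t)" "\<lfloor>s\<rfloor>"]
      by (simp add: frac_def)
    finally show ?thesis
      by (simp add: p)
  qed
  have "(frac (fst p), frac (snd p)) \<in> {0..1} \<times> {0..1}" for p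
    by (simp add: frac_lt_1 less_imp_le)
  then have "range h \<subseteq> h ` ({0..1} \<times> {0..1})"
    using reduce by blast
  moreover have "compact (h ` ({0..1} \<times> {0..1}))"
    by (intro compact_continuous_image continuous_on_subset[OF cont] compact_Times) auto
  ultimately show ?thesis
    using bounded_subset compact_imp_bounded by blast
qed

lemma bounded_additive_shift_eq_0:
  fixes h :: "'a::real_vector \<Rightarrow> real"
  assumes bnd: "bounded (range h)" and shift: "\<And>p. h (p + e) = h p + C"
  shows "C = 0"
proof (rule ccontr)
  assume "C \<noteq> 0"
  obtain B where B: "\<And>p. \<bar>h p\<bar> \<le> B"
    using bnd by (auto simp: bounded_iff)
  have hn: "h (of_nat n *\<^sub>R e) = h 0 + of_nat n * C" for n
    by (induction n) (simp_all add: shift[of "of_nat _ *\<^sub>R e", simplified add.commute] algebra_simps)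
  obtain n :: nat where n: "2 * B / \<bar>C\<bar> < of_nat n"
    using reals_Archimedean2 by blast
  have "of_nat n * \<bar>C\<bar> \<le> 2 * B"
    using B[of "of_nat n *\<^sub>R e"] B[of 0] hn[of n] by (simp add: abs_mult)
  with n \<open>C \<noteq> 0\<close> show False
    by (simp add: field_simps)
qed

definition torus_exp :: "real \<times> real \<Rightarrow> complex \<times> complex" where
  "torus_exp p = (cis (2 * pi * fst p), cis (2 * pi * snd p))"

lemma torus_exp_in_torus2: "torus_exp p \<in> torus2"
  by (simp add: torus_exp_def torus2_iff)

lemma continuous_on_torus_exp: "continuous_on UNIV torus_exp"
  unfolding torus_exp_def cis_conv_exp by (intro continuous_intros)

lemma torus_exp_add: "torus_exp (p + q) = rot2 (fst q) (snd q) (torus_exp p)"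
  by (simp add: torus_exp_def rot2_def distrib_left cis_mult[symmetric] algebra_simps)

lemma torus_circle_map_lift:
  fixes f :: "complex \<times> complex \<Rightarrow> complex"
  assumes cont: "continuous_on torus2 f" and circle: "\<And>p. p \<in> torus2 \<Longrightarrow> norm (f p) = 1"
  obtains g where "continuous_on UNIV g" "\<And>p. f (torus_exp p) = exp (\<i> * of_real (g p))"
proof -
  have "continuous_on UNIV (f \<circ> torus_exp)"
    by (intro continuous_on_compose[OF continuous_on_torus_exp] continuous_on_subset[OF cont])
       (auto simp: torus_exp_in_torus2)
  moreover have "f \<circ> torus_exp \<in> UNIV \<rightarrow> sphere 0 1"
    using circle torus_exp_in_torus2 by auto
  ultimately obtain g where cont_g: "continuous_on UNIV (complex_of_real \<circ> g)"
    and lift: "\<forall>p\<in>UNIV. (f \<circ> torus_exp) p = exp (\<i> * of_real (g p))"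
    using Borsukian_UNIV[unfolded Borsukian_continuous_logarithm_circle_real] by blast
  have "continuous_on UNIV (Re \<circ> (complex_of_real \<circ> g))"
    by (intro continuous_on_compose[OF cont_g] continuous_intros)
  moreover have "f (torus_exp p) = exp (\<i> * of_real (g p))" for p
    using lift by (metis UNIV_I comp_apply)
  ultimately show thesis
    by (intro that[of g]) (simp_all add: o_def)
qed

lemma rot2_eigenvalue_in_lattice:
  fixes f :: "complex \<times> complex \<Rightarrow> complex"
  assumes cont: "continuous_on torus2 f"
    and circle: "\<And>p. p \<in> torus2 \<Longrightarrow> norm (f p) = 1"
    and eigen: "\<And>p. p \<in> torus2 \<Longrightarrow> f (rot2 \<alpha> \<beta> p) = cis (2 * pi * \<gamma>) * f p"
  shows "\<exists>m1 m2 k :: int. \<gamma> = of_int m1 * \<alpha> + of_int m2 * \<beta> + of_int k"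
proof -
  obtain g where cont_g: "continuous_on UNIV g"
    and lift: "\<And>p. f (torus_exp p) = exp (\<i> * of_real (g p))"
    using torus_circle_map_lift[OF cont circle] by blast
  have shift: "exp (\<i> * of_real (g (p + q))) = exp (\<i> * of_real (2 * pi * c)) * exp (\<i> * of_real (g p))"
    if "f (rot2 (fst q) (snd q) (torus_exp p)) = cis (2 * pi * c) * f (torus_exp p)" for p q c
    using that by (simp add: lift cis_conv_exp flip: torus_exp_add)
  have rot2_unit: "rot2 1 0 = id" "rot2 0 1 = id"
    by (simp_all add: rot2_def fun_eq_iff)
  have shift1: "exp (\<i> * of_real (g (p + (1, 0)))) = exp (\<i> * of_real (2 * pi * 0)) * exp (\<i> * of_real (g p))"
    and shift2: "exp (\<i> * of_real (g (p + (0, 1)))) = exp (\<i> * of_real (2 * pi * 0)) * exp (\<i> * of_real (g p))"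
    and shift3: "exp (\<i> * of_real (g (p + (\<alpha>, \<beta>)))) = exp (\<i> * of_real (2 * pi * \<gamma>)) * exp (\<i> * of_real (g p))"
    for p
    by (intro shift; simp add: rot2_unit eigen torus_exp_in_torus2)+
  obtain m1 :: int where m1: "\<And>p. g (p + (1, 0)) - g p - 2 * pi * 0 = 2 * pi * of_int m1"
    using continuous_angle_shift[OF cont_g shift1] by blast
  obtain m2 :: int where m2: "\<And>p. g (p + (0, 1)) - g p - 2 * pi * 0 = 2 * pi * of_int m2"
    using continuous_angle_shift[OF cont_g shift2] by blast
  obtain k :: int where k: "\<And>p. g (p + (\<alpha>, \<beta>)) - g p - 2 * pi * \<gamma> = 2 * pi * of_int k"
    using continuous_angle_shift[OF cont_g shift3] by blast
  text \<open>Subtracting the linear part of the lift leaves a doubly periodic, hence bounded,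
    function that grows by a constant along (\<alpha>, \<beta>); the constant must vanish.\<close>
  define h where "h p = g p - 2 * pi * (of_int m1 * fst p + of_int m2 * snd p)" for p
  have "bounded (range h)"
  proof (rule bounded_range_doubly_periodic)
    show "continuous_on UNIV h"
      unfolding h_def by (intro continuous_intros cont_g)
  qed (use m1 m2 in \<open>simp_all add: h_def algebra_simps\<close>)
  moreover have "h (p + (\<alpha>, \<beta>)) = h p + 2 * pi * (\<gamma> + of_int k - of_int m1 * \<alpha> - of_int m2 * \<beta>)" for p
    using k[of p] by (simp add: h_def algebra_simps)
  ultimately have "2 * pi * (\<gamma> + of_int k - of_int m1 * \<alpha> - of_int m2 * \<beta>) = 0"
    by (rule bounded_additive_shift_eq_0)
  then have "\<gamma> = of_int m1 * \<alpha> + of_int m2 * \<beta> + of_int (- k)"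
    by simp
  then show ?thesis
    by blast
qed

lemma rot2_equivariant_map_lattice:
  assumes cont: "continuous_on torus2 H" and into: "\<And>p. p \<in> torus2 \<Longrightarrow> H p \<in> torus2"
    and equiv: "\<And>p. p \<in> torus2 \<Longrightarrow> H (rot2 \<alpha> \<beta> p) = rot2 \<alpha>' \<beta>' (H p)"
  shows "\<exists>m1 m2 k :: int. \<alpha>' = of_int m1 * \<alpha> + of_int m2 * \<beta> + of_int k"
    and "\<exists>m1 m2 k :: int. \<beta>' = of_int m1 * \<alpha> + of_int m2 * \<beta> + of_int k"
proof -
  have c: "continuous_on torus2 (fst \<circ> H)" "continuous_on torus2 (snd \<circ> H)"
    by (rule continuous_on_compose[OF cont], intro continuous_intros)+
  have n: "norm ((fst \<circ> H) p) = 1" "norm ((snd \<circ> H) p) = 1" if "p \<in> torus2" for p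
    using into[OF that] by (simp_all add: torus2_iff)
  have e: "(fst \<circ> H) (rot2 \<alpha> \<beta> p) = cis (2 * pi * \<alpha>') * (fst \<circ> H) p"
    "(snd \<circ> H) (rot2 \<alpha> \<beta> p) = cis (2 * pi * \<beta>') * (snd \<circ> H) p" if "p \<in> torus2" for p
    using equiv[OF that] by (simp_all add: rot2_apply)
  show "\<exists>m1 m2 k :: int. \<alpha>' = of_int m1 * \<alpha> + of_int m2 * \<beta> + of_int k"
    by (rule rot2_eigenvalue_in_lattice[OF c(1) n(1) e(1)])
  show "\<exists>m1 m2 k :: int. \<beta>' = of_int m1 * \<alpha> + of_int m2 * \<beta> + of_int k"
    by (rule rot2_eigenvalue_in_lattice[OF c(2) n(2) e(2)])
qed

lemma top_conjugate_torus_sym: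
  assumes "\<And>p. p \<in> torus2 \<Longrightarrow> f p \<in> torus2"
    and "top_conjugate_torus f g"
  shows "top_conjugate_torus g f"
proof -
  obtain h k where hom: "homeomorphism torus2 torus2 h k"
    and conj: "\<forall>p\<in>torus2. h (f p) = g (h p)"
    using assms(2) unfolding top_conjugate_torus_def by blast
  have "\<forall>q\<in>torus2. k (g q) = f (k q)"
  proof
    fix q assume q: "q \<in> torus2"
    then have kq: "k q \<in> torus2"
      using hom homeomorphism_image2 by blast
    have "h (f (k q)) = g (h (k q))"
      using conj kq by blast
    then have "h (f (k q)) = g q"
      using homeomorphism_apply2[OF hom q] by simp
    then have "k (g q) = k (h (f (k q)))"
      by simp
    also have "\<dots> = f (k q)"
      using homeomorphism_apply1[OF hom assms(1)[OF kq]] .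
    finally show "k (g q) = f (k q)" .
  qed
  moreover have "homeomorphism torus2 torus2 k h"
    using hom by (rule homeomorphism_symD)
  ultimately show ?thesis
    unfolding top_conjugate_torus_def by blast
qed

lemma minrot_conj_sym:
  assumes "(x, y) \<in> minrot_conj"
  shows "(y, x) \<in> minrot_conj"
proof -
  have "top_conjugate_torus (rot2 (fst x) (snd x)) (rot2 (fst y) (snd y))"
    using assms by (simp add: minrot_conj_iff)
  with rot2_in_torus2 have "top_conjugate_torus (rot2 (fst y) (snd y)) (rot2 (fst x) (snd x))"
    by (rule top_conjugate_torus_sym)
  with assms show ?thesis
    by (simp add: minrot_conj_iff)
qed

lemma frac_eq_if_int_combination:
  assumes "y = of_int m1 * a + of_int m2 * b + of_int k" "y \<in> {0..<1}"
  shows "y = frac (of_int m1 * a + of_int m2 * b)"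
proof -
  have "frac y = frac (of_int m1 * a + of_int m2 * b)"
    unfolding assms(1) by (rule frac_add_of_int_right)
  then show ?thesis
    using assms(2) by simp
qed

lemma minrot_conj_imp_torus_act:
  assumes "(x, y) \<in> minrot_conj"
  obtains M where "y = torus_act M x"
proof -
  have y: "y \<in> minrot_params"
    and "top_conjugate_torus (rot2 (fst x) (snd x)) (rot2 (fst y) (snd y))"
    using assms by (auto simp: minrot_conj_iff)
  then obtain H K where hom: "homeomorphism torus2 torus2 H K"
    and conj: "\<forall>p\<in>torus2. H (rot2 (fst x) (snd x) p) = rot2 (fst y) (snd y) (H p)"
    unfolding top_conjugate_torus_def by blast
  have "continuous_on torus2 H" "\<And>p. p \<in> torus2 \<Longrightarrow> H p \<in> torus2"
    using hom homeomorphism_image1 by (auto simp: homeomorphism_def)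
  from rot2_equivariant_map_lattice[OF this bspec[OF conj]]
  obtain a b k c d l where ab: "fst y = of_int a * fst x + of_int b * snd x + of_int k"
    and cd: "snd y = of_int c * fst x + of_int d * snd x + of_int l"
    by blast
  have "fst y \<in> {0..<1}" "snd y \<in> {0..<1}"
    using y minrot_params_subset by (auto simp: mem_Times_iff)
  then have "fst y = frac (of_int a * fst x + of_int b * snd x)"
    and "snd y = frac (of_int c * fst x + of_int d * snd x)"
    using frac_eq_if_int_combination ab cd by blast+
  then have "y = torus_act (a, b, c, d) x"
    by (simp add: torus_act_def prod_eq_iff)
  then show thesis
    by (rule that)
qed

lemma minrot_conj_imp_GL2Z:
  assumes "(x, y) \<in> minrot_conj"
  obtains M where "M \<in> GL2Z" "y = torus_act M x"
proof -
  have x: "x \<in> minrot_params"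
    using assms by (simp add: minrot_conj_iff)
  obtain M where M: "y = torus_act M x"
    using minrot_conj_imp_torus_act[OF assms] .
  obtain N where N: "x = torus_act N y"
    using minrot_conj_imp_torus_act[OF minrot_conj_sym[OF assms]] .
  have "torus_act (mat_mult N M) x = torus_act mat_1 x"
    using x minrot_params_subset by (auto simp: torus_act_mult torus_act_1 simp flip: M N)
  then have "mat_mult N M = mat_1"
    by (rule torus_act_eq_imp_eq[OF x])
  then have "M \<in> GL2Z"
    by (intro mat_det_eq_1_imp_GL2Z[of N]) (simp add: mat_det_def)
  with M show thesis
    using that by blast
qed

lemma minrot_conj_class:
  assumes "x \<in> minrot_params"
  shows "{y. (x, y) \<in> minrot_conj} = (\<lambda>M. torus_act M x) ` GL2Z"
proof
  show "{y. (x, y) \<in> minrot_conj} \<subseteq> (\<lambda>M. torus_act M x) ` GL2Z"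
    by (auto elim!: minrot_conj_imp_GL2Z)
  show "(\<lambda>M. torus_act M x) ` GL2Z \<subseteq> {y. (x, y) \<in> minrot_conj}"
    using minrot_conj_torus_act[OF assms] by auto
qed

definition rat_line :: "rat \<times> rat \<times> rat \<Rightarrow> (real \<times> real) set" where
  "rat_line t = {x. of_rat (fst t) * fst x + of_rat (fst (snd t)) * snd x + of_rat (snd (snd t)) = 0}"

lemma rat_line_sets [measurable]: "rat_line t \<in> sets lborel"
proof -
  have "closed (rat_line t)"
    unfolding rat_line_def by (intro closed_Collect_eq continuous_intros)
  then show ?thesis
    by simp
qed

lemma rat_line_null: "t \<noteq> 0 \<Longrightarrow> rat_line t \<in> null_sets lborel"
proof -
  assume t: "t \<noteq> 0"
  obtain p q r where tt: "t = (p, q, r)" by (cases t) auto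
  show ?thesis
  proof (cases "p = 0 \<and> q = 0")
    case True
    then have "rat_line t = {}"
      using t by (auto simp: rat_line_def tt zero_prod_def)
    then show ?thesis
      by simp
  next
    case False
    define a :: "real \<times> real" where "a = (of_rat p, of_rat q)"
    have "a \<noteq> 0"
      using False by (auto simp: a_def zero_prod_def)
    moreover have "rat_line t = {x. a \<bullet> x = - of_rat r}"
      by (auto simp: rat_line_def tt a_def inner_prod_def algebra_simps)
    ultimately have "negligible (rat_line t)"
      using negligible_hyperplane[of a "- of_rat r"] by simp
    then show ?thesis
      using null_sets_completion_iff[OF rat_line_sets] by (simp add: negligible_iff_null_sets)
  qed
qed

lemma minrot_params_eq: "minrot_params = unit_square - (\<Union>t\<in>- {0}. rat_line t)"
proof (intro set_eqI iffI)
  fix x assume x: "x \<in> minrot_params"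
  have "x \<notin> rat_line (p, q, r)" if "(p, q, r) \<noteq> 0" for p q r
  proof
    assume "x \<in> rat_line (p, q, r)"
    then have eq: "of_rat p * fst x + of_rat q * snd x + of_rat r = 0"
      by (simp add: rat_line_def)
    have indep: "rat_indep3 (fst x) (snd x) 1"
      using x by (cases x) (simp add: minrot_params_iff)
    have "(of_rat p :: real) = 0 \<and> (of_rat q :: real) = 0 \<and> (of_rat r :: real) = 0"
      by (rule rat_indep3_1D[OF indep Rats_of_rat Rats_of_rat Rats_of_rat eq])
    with that show False
      by (simp add: zero_prod_def)
  qed
  then show "x \<in> unit_square - (\<Union>t\<in>- {0}. rat_line t)"
    using x minrot_params_subset by auto
next
  fix x assume x: "x \<in> unit_square - (\<Union>t\<in>- {0}. rat_line t)"
  have "rat_indep3 (fst x) (snd x) 1"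
    unfolding rat_indep3_def
  proof (intro allI impI)
    fix p q r :: real
    assume h: "p \<in> \<rat> \<and> q \<in> \<rat> \<and> r \<in> \<rat> \<and> p * fst x + q * snd x + r * 1 = 0"
    then obtain p' q' r' where pqr: "p = of_rat p'" "q = of_rat q'" "r = of_rat r'"
      by (auto elim!: Rats_cases)
    then have "x \<in> rat_line (p', q', r')"
      using h by (simp add: rat_line_def)
    then have "(p', q', r') = 0"
      using x by blast
    then show "p = 0 \<and> q = 0 \<and> r = 0"
      by (simp add: pqr zero_prod_def)
  qed
  then show "x \<in> minrot_params"
    using x by (cases x) (simp add: minrot_params_iff)
qed

lemma rat_lines_null: "(\<Union>t\<in>- {0}. rat_line t) \<in> null_sets lborel"
  by (rule null_sets_UN') (auto intro: rat_line_null)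

lemma unit_square_sets [measurable]: "unit_square \<in> sets borel"
  by (simp add: borel_prod[symmetric])

lemma minrot_params_sets [measurable]: "minrot_params \<in> sets borel"
  unfolding minrot_params_eq using rat_lines_null by auto

lemma unit_square_diff_minrot_params_null: "unit_square - minrot_params \<in> null_sets lborel"
proof -
  have "unit_square - minrot_params = unit_square \<inter> (\<Union>t\<in>- {0}. rat_line t)"
    unfolding minrot_params_eq by blast
  then show ?thesis
    using null_set_Int2[OF rat_lines_null, of unit_square] by (simp add: Int_commute)
qed

lemma emeasure_minrot_params: "emeasure lborel minrot_params = 1"
proof -
  have "unit_square - (unit_square - minrot_params) = minrot_params"
    using minrot_params_subset by blast
  then have "emeasure lborel minrot_params = emeasure lborel unit_square"
    using emeasure_Diff_null_set[OF unit_square_diff_minrot_params_null, of unit_square] by simp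
  also have "\<dots> = emeasure lborel {0..<1::real} * emeasure lborel {0..<1::real}"
    by (simp add: lborel_prod[symmetric] lborel.emeasure_pair_measure_Times)
  finally show ?thesis
    by simp
qed

definition minrot_lborel :: "(real \<times> real) measure" where
  "minrot_lborel = restrict_space lborel minrot_params"

lemma space_minrot_lborel: "space minrot_lborel = minrot_params"
  by (simp add: minrot_lborel_def space_restrict_space)

lemma space_minrot_space: "space minrot_space = minrot_params"
  by (simp add: minrot_space_def space_restrict_space)

lemma sets_minrot_lborel: "sets minrot_lborel = sets minrot_space"
  by (simp add: minrot_lborel_def minrot_space_def sets_restrict_space)

lemma measurable_minrot_lborel_iff: "f \<in> measurable minrot_lborel N \<longleftrightarrow> f \<in> measurable minrot_space N"
  by (simp add: measurable_cong_sets[OF sets_minrot_lborel refl])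

lemma prob_space_minrot_lborel: "prob_space minrot_lborel"
proof (rule prob_spaceI)
  have "emeasure minrot_lborel minrot_params = emeasure lborel minrot_params"
    unfolding minrot_lborel_def by (rule emeasure_restrict_space) auto
  then show "emeasure minrot_lborel (space minrot_lborel) = 1"
    by (simp add: space_minrot_lborel emeasure_minrot_params)
qed

lemma torus_act_measurable_minrot_space:
  "M \<in> GL2Z \<Longrightarrow> torus_act M \<in> measurable minrot_space minrot_space"
  unfolding minrot_space_def
  by (intro measurable_restrict_space1 measurable_restrict_space2 borel_measurable_torus_act)
     (auto simp: space_restrict_space minrot_params_torus_act)

lemma nn_integral_lborel_translate:
  fixes f :: "real \<Rightarrow> ennreal"
  assumes [measurable]: "f \<in> borel_measurable borel"
  shows "(\<integral>\<^sup>+ x. f (x + t) \<partial>lborel) = (\<integral>\<^sup>+ x. f x \<partial>lborel)"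
  using nn_integral_real_affine[of f 1 t] by (simp add: add.commute)

lemma nn_integral_unit_interval_frac_shift:
  fixes G :: "real \<Rightarrow> ennreal"
  assumes [measurable]: "G \<in> borel_measurable borel"
  shows "(\<integral>\<^sup>+ a. indicator {0..<1} a * G (frac (a + c)) \<partial>lborel) = (\<integral>\<^sup>+ a. indicator {0..<1} a * G a \<partial>lborel)"
proof -
  define d where "d = frac c"
  have d: "0 \<le> d" "d < 1"
    by (auto simp: d_def frac_lt_1)
  text \<open>On [0, 1), the map a \<mapsto> frac (a + d) translates [0, 1 - d) by d and [1 - d, 1) by d - 1.\<close>
  have split: "indicator {0..<1} a * G (frac (a + c))
      = indicator {d..<1} (a + d) * G (a + d) + indicator {0..<d} (a + (d - 1)) * G (a + (d - 1))" for a
  proof -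
    have "frac (a + c) = frac (a + d + of_int \<lfloor>c\<rfloor>)"
      by (simp add: d_def frac_def algebra_simps)
    then have "frac (a + c) = frac (a + d)"
      by (simp only: frac_add_of_int_right)
    moreover have "frac (a + d) = a + d - 1" if "1 \<le> a + d" "a < 1"
      using that d frac_add_of_int_right[of "a + d - 1" 1] by (simp add: frac_eq)
    ultimately show ?thesis
      using d by (auto simp: indicator_def frac_eq add_diff_eq)
  qed
  have "(\<integral>\<^sup>+ a. indicator {0..<1} a * G (frac (a + c)) \<partial>lborel)
      = (\<integral>\<^sup>+ a. indicator {d..<1} (a + d) * G (a + d) \<partial>lborel)
        + (\<integral>\<^sup>+ a. indicator {0..<d} (a + (d - 1)) * G (a + (d - 1)) \<partial>lborel)"
    unfolding split by (rule nn_integral_add) auto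
  also have "\<dots> = (\<integral>\<^sup>+ a. indicator {d..<1} a * G a \<partial>lborel) + (\<integral>\<^sup>+ a. indicator {0..<d} a * G a \<partial>lborel)"
    by (simp add: nn_integral_lborel_translate[where f = "\<lambda>a. indicator _ a * G a"])
  also have "\<dots> = (\<integral>\<^sup>+ a. indicator {d..<1} a * G a + indicator {0..<d} a * G a \<partial>lborel)"
    by (rule nn_integral_add[symmetric]) auto
  also have "\<dots> = (\<integral>\<^sup>+ a. indicator {0..<1} a * G a \<partial>lborel)"
    using d by (intro nn_integral_cong) (auto simp: indicator_def)
  finally show ?thesis .
qed

lemma nn_integral_unit_square_iterated:
  fixes f :: "real \<times> real \<Rightarrow> ennreal"
  assumes [measurable]: "f \<in> borel_measurable borel"
  shows "(\<integral>\<^sup>+ x. indicator unit_square x * f x \<partial>lborel)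
      = (\<integral>\<^sup>+ b. indicator {0..<1} b * (\<integral>\<^sup>+ a. indicator {0..<1} a * f (a, b) \<partial>lborel) \<partial>lborel)"
    and "(\<integral>\<^sup>+ x. indicator unit_square x * f x \<partial>lborel)
      = (\<integral>\<^sup>+ a. indicator {0..<1} a * (\<integral>\<^sup>+ b. indicator {0..<1} b * f (a, b) \<partial>lborel) \<partial>lborel)"
proof -
  have m: "(\<lambda>x. indicator unit_square x * f x) \<in> borel_measurable (lborel \<Otimes>\<^sub>M lborel)"
    by (subst measurable_cong_sets[OF sets_pair_measure_cong[OF sets_lborel sets_lborel] refl])
       (simp add: borel_prod)
  have "(\<integral>\<^sup>+ x. indicator unit_square x * f x \<partial>lborel)
      = (\<integral>\<^sup>+ b. \<integral>\<^sup>+ a. indicator unit_square (a, b) * f (a, b) \<partial>lborel \<partial>lborel)"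
    and "(\<integral>\<^sup>+ x. indicator unit_square x * f x \<partial>lborel)
      = (\<integral>\<^sup>+ a. \<integral>\<^sup>+ b. indicator unit_square (a, b) * f (a, b) \<partial>lborel \<partial>lborel)"
    using lborel_pair.nn_integral_snd[OF m] lborel.nn_integral_fst[OF m] by (simp_all add: lborel_prod)
  moreover have "indicator unit_square (a, b) * f (a, b)
      = indicator {0..<1} b * (indicator {0..<1} a * f (a, b))" for a b :: real
    by (simp add: indicator_def)
  ultimately show "(\<integral>\<^sup>+ x. indicator unit_square x * f x \<partial>lborel)
      = (\<integral>\<^sup>+ b. indicator {0..<1} b * (\<integral>\<^sup>+ a. indicator {0..<1} a * f (a, b) \<partial>lborel) \<partial>lborel)"
    and "(\<integral>\<^sup>+ x. indicator unit_square x * f x \<partial>lborel)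
      = (\<integral>\<^sup>+ a. indicator {0..<1} a * (\<integral>\<^sup>+ b. indicator {0..<1} b * f (a, b) \<partial>lborel) \<partial>lborel)"
    by (simp_all add: nn_integral_cmult mult.left_commute)
qed

lemma nn_integral_unit_square_shear:
  fixes f :: "real \<times> real \<Rightarrow> ennreal"
  assumes [measurable]: "f \<in> borel_measurable borel"
  shows "(\<integral>\<^sup>+ x. indicator unit_square x * f (frac (fst x + c * snd x), snd x) \<partial>lborel)
       = (\<integral>\<^sup>+ x. indicator unit_square x * f x \<partial>lborel)"
    and "(\<integral>\<^sup>+ x. indicator unit_square x * f (fst x, frac (snd x + c * fst x)) \<partial>lborel)
       = (\<integral>\<^sup>+ x. indicator unit_square x * f x \<partial>lborel)"
proof -
  have [measurable]: "frac \<in> borel_measurable (borel :: real measure)"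
    unfolding frac_def by measurable
  have [measurable]: "f \<in> borel_measurable (borel \<Otimes>\<^sub>M borel)"
    by (simp add: borel_prod)
  have "(\<lambda>x. f (frac (fst x + c * snd x), snd x)) \<in> borel_measurable (borel \<Otimes>\<^sub>M borel)"
    and "(\<lambda>x. f (fst x, frac (snd x + c * fst x))) \<in> borel_measurable (borel \<Otimes>\<^sub>M borel)"
    by measurable
  then have m1: "(\<lambda>x. f (frac (fst x + c * snd x), snd x)) \<in> borel_measurable borel"
    and m2: "(\<lambda>x. f (fst x, frac (snd x + c * fst x))) \<in> borel_measurable borel"
    by (simp_all only: borel_prod)
  have inner1: "(\<integral>\<^sup>+ a. indicator {0..<1} a * f (frac (a + c * b), b) \<partial>lborel)
      = (\<integral>\<^sup>+ a. indicator {0..<1} a * f (a, b) \<partial>lborel)"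
    and inner2: "(\<integral>\<^sup>+ b. indicator {0..<1} b * f (a, frac (b + c * a)) \<partial>lborel)
      = (\<integral>\<^sup>+ b. indicator {0..<1} b * f (a, b) \<partial>lborel)" for a b
    by (rule nn_integral_unit_interval_frac_shift, measurable)+
  show "(\<integral>\<^sup>+ x. indicator unit_square x * f (frac (fst x + c * snd x), snd x) \<partial>lborel)
       = (\<integral>\<^sup>+ x. indicator unit_square x * f x \<partial>lborel)"
    using nn_integral_unit_square_iterated(1)[OF m1] nn_integral_unit_square_iterated(1)[OF assms]
    by (simp add: inner1)
  show "(\<integral>\<^sup>+ x. indicator unit_square x * f (fst x, frac (snd x + c * fst x)) \<partial>lborel)
       = (\<integral>\<^sup>+ x. indicator unit_square x * f x \<partial>lborel)"
    using nn_integral_unit_square_iterated(2)[OF m2] nn_integral_unit_square_iterated(2)[OF assms]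
    by (simp add: inner2)
qed

lemma torus_act_shear:
  assumes "x \<in> unit_square"
  shows "torus_act (1, c, 0, 1) x = (frac (fst x + of_int c * snd x), snd x)"
    and "torus_act (1, 0, c, 1) x = (fst x, frac (snd x + of_int c * fst x))"
  using assms by (auto simp: torus_act_def mem_Times_iff add.commute)

lemma shear_GL2Z: "(1, c, 0, 1) \<in> GL2Z" "(1, 0, c, 1) \<in> GL2Z"
  by (simp_all add: GL2Z_def mat_det_def)

lemma nn_integral_unit_square_torus_act_shear:
  fixes f :: "real \<times> real \<Rightarrow> ennreal"
  assumes M: "M = (1, c, 0, 1) \<or> M = (1, 0, c, 1)" and f: "f \<in> borel_measurable borel"
  shows "(\<integral>\<^sup>+ x. indicator unit_square x * f (torus_act M x) \<partial>lborel)
    = (\<integral>\<^sup>+ x. indicator unit_square x * f x \<partial>lborel)"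
  using M
proof
  assume "M = (1, c, 0, 1)"
  then have "indicator unit_square x * f (torus_act M x)
      = indicator unit_square x * f (frac (fst x + of_int c * snd x), snd x)" for x
    by (cases "x \<in> unit_square") (simp_all add: torus_act_shear)
  then show ?thesis
    by (simp add: nn_integral_unit_square_shear(1)[OF f])
next
  assume "M = (1, 0, c, 1)"
  then have "indicator unit_square x * f (torus_act M x)
      = indicator unit_square x * f (fst x, frac (snd x + of_int c * fst x))" for x
    by (cases "x \<in> unit_square") (simp_all add: torus_act_shear)
  then show ?thesis
    by (simp add: nn_integral_unit_square_shear(2)[OF f])
qed

lemma nn_integral_minrot_lborel_shear:
  fixes G :: "real \<times> real \<Rightarrow> ennreal"
  assumes M: "M = (1, c, 0, 1) \<or> M = (1, 0, c, 1)"
    and G: "G \<in> borel_measurable minrot_lborel"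
  shows "(\<integral>\<^sup>+ x. G (torus_act M x) \<partial>minrot_lborel) = (\<integral>\<^sup>+ x. G x \<partial>minrot_lborel)"
proof -
  let ?X = minrot_params
  define Gt where "Gt y = G y * indicator ?X y" for y
  have Gt [measurable]: "Gt \<in> borel_measurable borel"
    using G unfolding Gt_def minrot_lborel_def
    by (subst (asm) borel_measurable_restrict_space_iff_ennreal) auto
  have M_GL2Z: "M \<in> GL2Z"
    using M shear_GL2Z by auto
  have "(\<integral>\<^sup>+ x. G (torus_act M x) \<partial>minrot_lborel) = (\<integral>\<^sup>+ x. indicator ?X x * G (torus_act M x) \<partial>lborel)"
    unfolding minrot_lborel_def by (subst nn_integral_restrict_space) (auto simp: mult.commute)
  also have "\<dots> = (\<integral>\<^sup>+ x. indicator unit_square x * Gt (torus_act M x) \<partial>lborel)"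
  proof (rule nn_integral_cong_AE)
    show "AE x in lborel. indicator ?X x * G (torus_act M x) = indicator unit_square x * Gt (torus_act M x)"
      using AE_not_in[OF unit_square_diff_minrot_params_null]
      by eventually_elim
         (use minrot_params_subset minrot_params_torus_act[OF _ M_GL2Z] in \<open>auto simp: Gt_def indicator_def\<close>)
  qed
  also have "\<dots> = (\<integral>\<^sup>+ x. indicator unit_square x * Gt x \<partial>lborel)"
    by (rule nn_integral_unit_square_torus_act_shear[OF M Gt])
  also have "\<dots> = (\<integral>\<^sup>+ x. G x \<partial>minrot_lborel)"
    unfolding minrot_lborel_def using minrot_params_subset
    by (subst nn_integral_restrict_space) (auto simp: Gt_def indicator_def intro!: nn_integral_cong)
  finally show ?thesis .
qed

lemma integral_minrot_lborel_shear:
  fixes F :: "real \<times> real \<Rightarrow> real"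
  assumes M: "M = (1, c, 0, 1) \<or> M = (1, 0, c, 1)"
    and F: "F \<in> borel_measurable minrot_lborel" and nonneg: "\<And>x. x \<in> minrot_params \<Longrightarrow> 0 \<le> F x"
  shows "integral\<^sup>L minrot_lborel (\<lambda>x. F (torus_act M x)) = integral\<^sup>L minrot_lborel F"
proof -
  have M_GL2Z: "M \<in> GL2Z"
    using M shear_GL2Z by auto
  have "torus_act M \<in> measurable minrot_lborel minrot_lborel"
    using torus_act_measurable_minrot_space[OF M_GL2Z]
    by (simp add: measurable_cong_sets[OF sets_minrot_lborel sets_minrot_lborel])
  then have FM: "(\<lambda>x. F (torus_act M x)) \<in> borel_measurable minrot_lborel"
    using F by measurable
  have "integral\<^sup>L minrot_lborel (\<lambda>x. F (torus_act M x))
      = enn2real (\<integral>\<^sup>+ x. ennreal (F (torus_act M x)) \<partial>minrot_lborel)"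
    using nonneg minrot_params_torus_act[OF _ M_GL2Z]
    by (intro integral_eq_nn_integral FM AE_I2) (simp add: space_minrot_lborel)
  also have "\<dots> = enn2real (\<integral>\<^sup>+ x. ennreal (F x) \<partial>minrot_lborel)"
    using nn_integral_minrot_lborel_shear[OF M, of "\<lambda>x. ennreal (F x)"] F by simp
  also have "\<dots> = integral\<^sup>L minrot_lborel F"
    using nonneg by (intro integral_eq_nn_integral[symmetric] F AE_I2) (simp add: space_minrot_lborel)
  finally show ?thesis .
qed

definition mat_row1 :: "imat \<Rightarrow> int \<times> int" where
  "mat_row1 M = (case M of (a,b,c,d) \<Rightarrow> (a,b))"

definition row_mult :: "int \<times> int \<Rightarrow> imat \<Rightarrow> int \<times> int" where
  "row_mult r M = (case r of (r1, r2) \<Rightarrow> case M of (a,b,c,d) \<Rightarrow> (r1*a + r2*c, r1*b + r2*d))"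

lemma mat_row1_mult: "mat_row1 (mat_mult N G) = row_mult (mat_row1 N) G"
  by (cases N; cases G) (simp add: mat_row1_def row_mult_def mat_mult_def)

definition row_mass :: "(imat \<Rightarrow> real) \<Rightarrow> (int \<times> int) set \<Rightarrow> real" where
  "row_mass f S = infsum (\<lambda>M. if mat_row1 M \<in> S then f M else 0) GL2Z"

locale GL2Z_distribution =
  fixes f :: "imat \<Rightarrow> real"
  assumes has_sum: "(f has_sum 1) GL2Z" and nonneg: "\<And>M. M \<in> GL2Z \<Longrightarrow> 0 \<le> f M"
begin

lemma summable: "f summable_on GL2Z"
  using has_sum by (auto simp: summable_on_def)

lemma row_summable: "(\<lambda>M. if mat_row1 M \<in> S then f M else 0) summable_on GL2Z"
  by (rule summable_on_comparison_test[OF summable]) (auto simp: nonneg)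

lemma row_mass_nonneg: "0 \<le> row_mass f S"
  unfolding row_mass_def by (rule infsum_nonneg) (auto simp: nonneg)

lemma row_mass_mono: "S \<subseteq> T \<Longrightarrow> row_mass f S \<le> row_mass f T"
  unfolding row_mass_def by (rule infsum_mono[OF row_summable row_summable]) (auto simp: nonneg)

lemma row_mass_le_1: "row_mass f S \<le> 1"
proof -
  have "row_mass f S \<le> row_mass f UNIV"
    by (rule row_mass_mono) simp
  then show ?thesis
    using infsumI[OF has_sum] by (simp add: row_mass_def)
qed

lemma row_mass_Un: "S \<inter> T = {} \<Longrightarrow> row_mass f (S \<union> T) = row_mass f S + row_mass f T"
  unfolding row_mass_def
  by (subst infsum_add[symmetric, OF row_summable row_summable], rule infsum_cong) auto

lemma row_mass_eq_1: "mat_row1 ` GL2Z \<subseteq> T \<Longrightarrow> row_mass f T = 1"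
  unfolding row_mass_def using infsumI[OF has_sum] by (subst infsum_cong[where g = f]) auto

end

lemma has_sum_diff:
  fixes f g :: "'a \<Rightarrow> 'b::topological_ab_group_add"
  assumes "(f has_sum a) A" "(g has_sum b) A"
  shows "((\<lambda>x. f x - g x) has_sum (a - b)) A"
  using has_sum_add[OF assms(1), of "\<lambda>x. - g x" "- b"] assms(2) by (simp add: has_sum_uminus)

lemma row_mass_diff_le:
  assumes "GL2Z_distribution f" "GL2Z_distribution g"
  shows "\<bar>row_mass f S - row_mass g S\<bar> \<le> infsum (\<lambda>M. \<bar>f M - g M\<bar>) GL2Z"
proof -
  interpret f: GL2Z_distribution f by fact
  interpret g: GL2Z_distribution g by fact
  define h where "h = (\<lambda>M. if mat_row1 M \<in> S then f M - g M else 0)"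
  have "(h has_sum (row_mass f S - row_mass g S)) GL2Z"
    using has_sum_diff[OF f.row_summable[of S, unfolded summable_iff_has_sum_infsum]
        g.row_summable[of S, unfolded summable_iff_has_sum_infsum]]
    by (simp add: h_def row_mass_def if_distrib[of "\<lambda>y. y - _"] if_distrib[of "\<lambda>y. _ - y"] cong: if_cong)
  then have h: "infsum h GL2Z = row_mass f S - row_mass g S" "h summable_on GL2Z"
    by (auto simp: infsumI summable_on_def)
  have "(\<lambda>M. f M - g M) summable_on GL2Z"
    using has_sum_diff[OF f.has_sum g.has_sum] by (auto simp: summable_on_def)
  then have abs_summable: "(\<lambda>M. norm (f M - g M)) summable_on GL2Z" "(\<lambda>M. norm (h M)) summable_on GL2Z"
    using h(2) by (simp_all only: summable_on_iff_abs_summable_on_real[symmetric])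
  have "\<bar>infsum h GL2Z\<bar> \<le> infsum (\<lambda>M. norm (h M)) GL2Z"
    using norm_infsum_bound[OF abs_summable(2)] by simp
  also have "\<dots> \<le> infsum (\<lambda>M. norm (f M - g M)) GL2Z"
    by (rule infsum_mono[OF abs_summable(2,1)]) (auto simp: h_def)
  finally show ?thesis
    by (simp add: h(1))
qed

lemma borel_measurable_infsum_countable:
  fixes F :: "'i \<Rightarrow> 'a \<Rightarrow> real"
  assumes I: "countable I" and F: "\<And>i. i \<in> I \<Longrightarrow> F i \<in> borel_measurable M"
    and summable: "\<And>x. x \<in> space M \<Longrightarrow> (\<lambda>i. F i x) summable_on I"
  shows "(\<lambda>x. infsum (\<lambda>i. F i x) I) \<in> borel_measurable M"
proof (cases "finite I")
  case True
  then show ?thesis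
    using F by simp
next
  case False
  define e where "e = from_nat_into I"
  have e: "bij_betw e UNIV I"
    unfolding e_def by (rule bij_betw_from_nat_into[OF I False])
  have "(\<lambda>x. \<Sum>k. F (e k) x) \<in> borel_measurable M"
    using e F by (intro borel_measurable_suminf) (auto simp: bij_betw_def)
  moreover have "infsum (\<lambda>i. F i x) I = (\<Sum>k. F (e k) x)" if "x \<in> space M" for x
  proof -
    have "((\<lambda>k. F (e k) x) has_sum infsum (\<lambda>i. F i x) I) UNIV"
      using has_sum_reindex_bij_betw[OF e, of "\<lambda>i. F i x"] summable[OF that]
      by (simp add: summable_iff_has_sum_infsum)
    then have "(\<lambda>k. F (e k) x) sums infsum (\<lambda>i. F i x) I"
      by (rule has_sum_imp_sums)
    then show ?thesis
      by (simp add: sums_iff)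
  qed
  ultimately show ?thesis
    using measurable_cong by (metis (no_types, lifting))
qed

section \<open>An amenability witness yields almost invariant means on rows\<close>

locale amenability_witness =
  fixes \<phi> :: "nat \<Rightarrow> (real \<times> real) \<times> (real \<times> real) \<Rightarrow> real" and A :: "(real \<times> real) set"
  assumes phi_measurable: "\<And>n. \<phi> n \<in> borel_measurable (restrict_space (minrot_space \<Otimes>\<^sub>M minrot_space) minrot_conj)"
    and phi_nonneg: "\<And>n p. p \<in> minrot_conj \<Longrightarrow> 0 \<le> \<phi> n p"
    and phi_has_sum: "\<And>n x. x \<in> minrot_params \<Longrightarrow> ((\<lambda>y. \<phi> n (x, y)) has_sum 1) {y. (x, y) \<in> minrot_conj}"
    and A_sets: "A \<in> sets minrot_space"
    and A_invariant: "\<And>x y. (x, y) \<in> minrot_conj \<Longrightarrow> x \<in> A \<longleftrightarrow> y \<in> A"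
    and A_conull: "emeasure minrot_lborel A = 1"
    and phi_tendsto: "\<And>x x'. (x, x') \<in> minrot_conj \<Longrightarrow> x \<in> A \<Longrightarrow> x' \<in> A \<Longrightarrow>
       (\<lambda>n. infsum (\<lambda>y. \<bar>\<phi> n (x, y) - \<phi> n (x', y)\<bar>) {y. (x, y) \<in> minrot_conj}) \<longlonglongrightarrow> 0"
begin

text \<open>Since the action is free, \<phi> n (x, -) on the class of x is a probability distribution
  on GL2Z; row_mean is its mass on a set of first rows.\<close>

definition row_mean :: "nat \<Rightarrow> (int \<times> int) set \<Rightarrow> real \<times> real \<Rightarrow> real" where
  "row_mean n S x = row_mass (\<lambda>M. \<phi> n (x, torus_act M x)) S"

definition integrated_row_mean :: "nat \<Rightarrow> (int \<times> int) set \<Rightarrow> real" where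
  "integrated_row_mean n S = integral\<^sup>L minrot_lborel (row_mean n S)"

lemma GL2Z_distribution_orbit:
  assumes x: "x \<in> minrot_params" and xz: "(x, z) \<in> minrot_conj"
  shows "GL2Z_distribution (\<lambda>N. \<phi> n (z, torus_act N x))"
proof
  have z: "z \<in> minrot_params"
    using xz by (simp add: minrot_conj_iff)
  obtain G where G: "G \<in> GL2Z" "z = torus_act G x"
    using minrot_conj_imp_GL2Z[OF xz] .
  have "(\<lambda>N. torus_act N z) ` GL2Z = (\<lambda>N. torus_act N x) ` GL2Z"
  proof -
    have "(\<lambda>N. torus_act N x) ` (\<lambda>N. mat_mult N G) ` GL2Z = (\<lambda>N. torus_act N z) ` GL2Z"
      using G by (simp add: image_image torus_act_mult)
    then show ?thesis
      using bij_betw_imp_surj_on[OF bij_betw_mat_mult_right[OF G(1)]] by simp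
  qed
  then have orbit: "{y. (z, y) \<in> minrot_conj} = (\<lambda>N. torus_act N x) ` GL2Z"
    using minrot_conj_class[OF z] by simp
  then have "((\<lambda>y. \<phi> n (z, y)) has_sum 1) ((\<lambda>N. torus_act N x) ` GL2Z)"
    using phi_has_sum[OF z] by simp
  then show "((\<lambda>N. \<phi> n (z, torus_act N x)) has_sum 1) GL2Z"
    by (simp add: has_sum_reindex[OF inj_on_torus_act[OF x]] o_def)
  show "0 \<le> \<phi> n (z, torus_act N x)" if "N \<in> GL2Z" for N
    using phi_nonneg orbit that by blast
qed

lemma GL2Z_distribution_self:
  assumes "x \<in> minrot_params"
  shows "GL2Z_distribution (\<lambda>N. \<phi> n (x, torus_act N x))"
proof -
  have "torus_act mat_1 x = x"
    using assms minrot_params_subset by (blast intro: torus_act_1)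
  then have "(x, x) \<in> minrot_conj"
    using minrot_conj_torus_act[OF assms mat_1_GL2Z] by simp
  then show ?thesis
    by (rule GL2Z_distribution_orbit[OF assms])
qed

lemma row_mean_bounds: "x \<in> minrot_params \<Longrightarrow> 0 \<le> row_mean n S x \<and> row_mean n S x \<le> 1"
  using GL2Z_distribution.row_mass_nonneg GL2Z_distribution.row_mass_le_1 GL2Z_distribution_self
  by (simp add: row_mean_def)

lemma borel_measurable_row_mean: "row_mean n S \<in> borel_measurable minrot_lborel"
proof -
  have "(\<lambda>x. \<phi> n (x, torus_act M x)) \<in> borel_measurable minrot_space" if M: "M \<in> GL2Z" for M
  proof -
    have "(\<lambda>x. (x, torus_act M x)) \<in> measurable minrot_space (minrot_space \<Otimes>\<^sub>M minrot_space)"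
      by (intro measurable_Pair measurable_ident_sets refl torus_act_measurable_minrot_space[OF M])
    moreover have "(\<lambda>x. (x, torus_act M x)) \<in> space minrot_space \<rightarrow> minrot_conj"
      by (auto simp: space_minrot_space intro: minrot_conj_torus_act[OF _ M])
    ultimately have "(\<lambda>x. (x, torus_act M x))
        \<in> measurable minrot_space (restrict_space (minrot_space \<Otimes>\<^sub>M minrot_space) minrot_conj)"
      using measurable_restrict_space2 by blast
    from measurable_compose[OF this phi_measurable] show ?thesis
      by (simp add: o_def)
  qed
  then have "row_mean n S \<in> borel_measurable minrot_space"
    unfolding row_mean_def row_mass_def
    by (intro borel_measurable_infsum_countable countable_GL2Z)
       (auto simp: space_minrot_space intro: GL2Z_distribution.row_summable[OF GL2Z_distribution_self])
  then show ?thesis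
    by (simp add: measurable_minrot_lborel_iff)
qed

lemma row_mean_torus_act:
  assumes x: "x \<in> minrot_params" and G: "G \<in> GL2Z"
  shows "row_mean n S (torus_act G x)
    = row_mass (\<lambda>N. \<phi> n (torus_act G x, torus_act N x)) {r. row_mult r (mat_inv G) \<in> S}"
proof -
  let ?F = "\<lambda>M. if mat_row1 M \<in> S then \<phi> n (torus_act G x, torus_act M (torus_act G x)) else 0"
  have "row_mean n S (torus_act G x) = infsum (\<lambda>N. ?F (mat_mult N (mat_inv G))) GL2Z"
    unfolding row_mean_def row_mass_def
    by (rule infsum_reindex_bij_betw[OF bij_betw_mat_mult_right[OF GL2Z_inv[OF G]], symmetric])
  also have "\<dots> = row_mass (\<lambda>N. \<phi> n (torus_act G x, torus_act N x)) {r. row_mult r (mat_inv G) \<in> S}"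
    unfolding row_mass_def
    by (intro infsum_cong)
       (simp add: torus_act_mult[symmetric] mat_mult_assoc mat_mult_inv_left[OF G] mat_row1_mult)
  finally show ?thesis .
qed

lemma row_mean_torus_act_diff_le:
  assumes x: "x \<in> minrot_params" and G: "G \<in> GL2Z"
  shows "\<bar>row_mean n S (torus_act G x) - row_mean n {r. row_mult r (mat_inv G) \<in> S} x\<bar>
     \<le> infsum (\<lambda>y. \<bar>\<phi> n (x, y) - \<phi> n (torus_act G x, y)\<bar>) {y. (x, y) \<in> minrot_conj}"
proof -
  let ?S' = "{r. row_mult r (mat_inv G) \<in> S}"
  have "\<bar>row_mean n S (torus_act G x) - row_mean n ?S' x\<bar>
      = \<bar>row_mass (\<lambda>N. \<phi> n (torus_act G x, torus_act N x)) ?S' - row_mass (\<lambda>N. \<phi> n (x, torus_act N x)) ?S'\<bar>"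
    by (subst row_mean_torus_act[OF x G]) (simp add: row_mean_def)
  also have "\<dots> \<le> infsum (\<lambda>N. \<bar>\<phi> n (torus_act G x, torus_act N x) - \<phi> n (x, torus_act N x)\<bar>) GL2Z"
    by (intro row_mass_diff_le GL2Z_distribution_orbit GL2Z_distribution_self
        minrot_conj_torus_act x G)
  also have "\<dots> = infsum (\<lambda>y. \<bar>\<phi> n (x, y) - \<phi> n (torus_act G x, y)\<bar>) ((\<lambda>N. torus_act N x) ` GL2Z)"
    by (simp add: infsum_reindex[OF inj_on_torus_act[OF x]] o_def abs_minus_commute)
  finally show ?thesis
    by (simp add: minrot_conj_class[OF x])
qed

lemma row_mean_torus_act_tendsto:
  assumes x: "x \<in> A" and G: "G \<in> GL2Z"
  shows "(\<lambda>n. \<bar>row_mean n S (torus_act G x) - row_mean n {r. row_mult r (mat_inv G) \<in> S} x\<bar>) \<longlonglongrightarrow> 0"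
proof -
  have x_params: "x \<in> minrot_params"
    using sets.sets_into_space[OF A_sets] x by (auto simp: space_minrot_space)
  have xG: "(x, torus_act G x) \<in> minrot_conj"
    by (rule minrot_conj_torus_act[OF x_params G])
  then have "torus_act G x \<in> A"
    using A_invariant x by blast
  with xG x have "(\<lambda>n. infsum (\<lambda>y. \<bar>\<phi> n (x, y) - \<phi> n (torus_act G x, y)\<bar>) {y. (x, y) \<in> minrot_conj}) \<longlonglongrightarrow> 0"
    by (rule phi_tendsto)
  then show ?thesis
    by (rule Lim_null_comparison[rotated])
       (auto intro!: always_eventually row_mean_torus_act_diff_le[OF x_params G])
qed

lemma integrable_row_mean_torus_act:
  assumes G: "G \<in> GL2Z"
  shows "integrable minrot_lborel (\<lambda>x. row_mean n S (torus_act G x))"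
proof -
  interpret prob_space minrot_lborel
    by (rule prob_space_minrot_lborel)
  have "torus_act G \<in> measurable minrot_lborel minrot_lborel"
    using torus_act_measurable_minrot_space[OF G]
    by (simp add: measurable_cong_sets[OF sets_minrot_lborel sets_minrot_lborel])
  then have "(\<lambda>x. row_mean n S (torus_act G x)) \<in> borel_measurable minrot_lborel"
    using borel_measurable_row_mean by measurable
  then show ?thesis
    using row_mean_bounds minrot_params_torus_act[OF _ G]
    by (intro integrable_const_bound[where B = 1] AE_I2) (auto simp: space_minrot_lborel)
qed

lemma integrated_row_mean_torus_act_tendsto:
  assumes G: "G \<in> GL2Z"
  shows "(\<lambda>n. integral\<^sup>L minrot_lborel
      (\<lambda>x. \<bar>row_mean n S (torus_act G x) - row_mean n {r. row_mult r (mat_inv G) \<in> S} x\<bar>)) \<longlonglongrightarrow> 0"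
proof -
  interpret prob_space minrot_lborel
    by (rule prob_space_minrot_lborel)
  let ?S' = "{r. row_mult r (mat_inv G) \<in> S}"
  have "(\<lambda>n. integral\<^sup>L minrot_lborel (\<lambda>x. \<bar>row_mean n S (torus_act G x) - row_mean n ?S' x\<bar>))
      \<longlonglongrightarrow> integral\<^sup>L minrot_lborel (\<lambda>x. 0)"
  proof (rule integral_dominated_convergence[where w = "\<lambda>x. 2"])
    show "(\<lambda>x. \<bar>row_mean n S (torus_act G x) - row_mean n ?S' x\<bar>) \<in> borel_measurable minrot_lborel" for n
      using integrable_row_mean_torus_act[OF G] borel_measurable_row_mean by measurable
    have "AE x in minrot_lborel. x \<in> A"
      using A_conull A_sets by (intro AE_prob_1) (simp add: measure_def sets_minrot_lborel)
    then show "AE x in minrot_lborel. (\<lambda>n. \<bar>row_mean n S (torus_act G x) - row_mean n ?S' x\<bar>) \<longlonglongrightarrow> 0"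
      by eventually_elim (rule row_mean_torus_act_tendsto[OF _ G])
    show "AE x in minrot_lborel. norm \<bar>row_mean n S (torus_act G x) - row_mean n ?S' x\<bar> \<le> 2" for n
    proof (rule AE_I2)
      fix x assume "x \<in> space minrot_lborel"
      then have "x \<in> minrot_params"
        by (simp add: space_minrot_lborel)
      then show "norm \<bar>row_mean n S (torus_act G x) - row_mean n ?S' x\<bar> \<le> 2"
        using row_mean_bounds[of x n ?S'] row_mean_bounds[OF minrot_params_torus_act[OF _ G], of x n S]
        by auto
    qed
  qed auto
  then show ?thesis
    by simp
qed

lemma integrable_row_mean: "integrable minrot_lborel (row_mean n S)"
proof -
  interpret prob_space minrot_lborel
    by (rule prob_space_minrot_lborel)
  show ?thesis
    using row_mean_bounds
    by (intro integrable_const_bound[where B = 1] AE_I2 borel_measurable_row_mean)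
       (auto simp: space_minrot_lborel)
qed

lemma integrated_row_mean_mono: "S \<subseteq> T \<Longrightarrow> integrated_row_mean n S \<le> integrated_row_mean n T"
  unfolding integrated_row_mean_def row_mean_def
  by (intro integral_mono[OF integrable_row_mean[unfolded row_mean_def] integrable_row_mean[unfolded row_mean_def]]
      GL2Z_distribution.row_mass_mono[OF GL2Z_distribution_self])
     (simp_all add: space_minrot_lborel)

lemma integrated_row_mean_Un:
  assumes "S \<inter> T = {}"
  shows "integrated_row_mean n (S \<union> T) = integrated_row_mean n S + integrated_row_mean n T"
proof -
  have "integrated_row_mean n (S \<union> T) = integral\<^sup>L minrot_lborel (\<lambda>x. row_mean n S x + row_mean n T x)"
    unfolding integrated_row_mean_def using assms
    by (intro Bochner_Integration.integral_cong refl)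
       (simp add: space_minrot_lborel row_mean_def GL2Z_distribution.row_mass_Un[OF GL2Z_distribution_self])
  then show ?thesis
    by (simp add: integrated_row_mean_def integrable_row_mean)
qed

lemma integrated_row_mean_eq_1:
  assumes "mat_row1 ` GL2Z \<subseteq> T"
  shows "integrated_row_mean n T = 1"
proof -
  interpret prob_space minrot_lborel
    by (rule prob_space_minrot_lborel)
  have "integrated_row_mean n T = integral\<^sup>L minrot_lborel (\<lambda>x. 1)"
    unfolding integrated_row_mean_def using assms
    by (intro Bochner_Integration.integral_cong refl)
       (simp add: space_minrot_lborel row_mean_def GL2Z_distribution.row_mass_eq_1[OF GL2Z_distribution_self])
  then show ?thesis
    by (simp add: prob_space)
qed

text \<open>The shear moves the integrated mean only by the integrated defect of \<phi>, since
  it preserves the measure.\<close>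

lemma integrated_row_mean_shear_le:
  assumes G: "G = (1, c, 0, 1) \<or> G = (1, 0, c, 1)"
  shows "integrated_row_mean n {r. row_mult r (mat_inv G) \<in> S} - integrated_row_mean n S
    \<le> integral\<^sup>L minrot_lborel
      (\<lambda>x. \<bar>row_mean n S (torus_act G x) - row_mean n {r. row_mult r (mat_inv G) \<in> S} x\<bar>)"
proof -
  let ?S' = "{r. row_mult r (mat_inv G) \<in> S}"
  have G_GL2Z: "G \<in> GL2Z"
    using G shear_GL2Z by auto
  have "integrated_row_mean n S = integral\<^sup>L minrot_lborel (\<lambda>x. row_mean n S (torus_act G x))"
    unfolding integrated_row_mean_def
    by (rule integral_minrot_lborel_shear[OF G borel_measurable_row_mean, symmetric])
       (simp add: row_mean_bounds)
  then have "integrated_row_mean n ?S' - integrated_row_mean n S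
      = integral\<^sup>L minrot_lborel (\<lambda>x. row_mean n ?S' x - row_mean n S (torus_act G x))"
    by (simp add: integrated_row_mean_def integrable_row_mean integrable_row_mean_torus_act[OF G_GL2Z])
  also have "\<dots> \<le> integral\<^sup>L minrot_lborel (\<lambda>x. \<bar>row_mean n S (torus_act G x) - row_mean n ?S' x\<bar>)"
    using integral_abs_bound[of minrot_lborel "\<lambda>x. row_mean n ?S' x - row_mean n S (torus_act G x)"]
    by (simp add: abs_minus_commute)
  finally show ?thesis .
qed

end

section \<open>No almost invariant mean on the rows of GL2Z\<close>

text \<open>Cones of primitive vectors for a ping-pong argument with the shears
  (1, 0, 2, 1) and (1, 2, 0, 1), acting on rows from the right.\<close>

definition cone1 :: "(int \<times> int) set" where
  "cone1 = {r. \<bar>snd r\<bar> < \<bar>fst r\<bar>}"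

definition cone2 :: "(int \<times> int) set" where
  "cone2 = {r. \<bar>fst r\<bar> < \<bar>snd r\<bar>}"

definition same_sign :: "(int \<times> int) set" where
  "same_sign = {r. 0 \<le> fst r \<and> 0 \<le> snd r \<or> fst r \<le> 0 \<and> snd r \<le> 0}"

definition diag :: "(int \<times> int) set" where
  "diag = {r. fst r = snd r \<and> fst r \<noteq> 0}"

definition antidiag :: "(int \<times> int) set" where
  "antidiag = {r. fst r = - snd r \<and> fst r \<noteq> 0}"

lemma row_mult_shears:
  "row_mult r (1, 0, 2, 1) = (fst r + 2 * snd r, snd r)"
  "row_mult r (1, 2, 0, 1) = (fst r, 2 * fst r + snd r)"
  by (cases r; simp add: row_mult_def)+

lemma mat_row1_GL2Z: "M \<in> GL2Z \<Longrightarrow> mat_row1 M \<in> cone1 \<union> cone2 \<union> diag \<union> antidiag"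
  by (cases M) (auto simp: GL2Z_def mat_det_def mat_row1_def cone1_def cone2_def diag_def antidiag_def abs_if)

lemma mean_shear_defect_ge_1:
  fixes m :: "(int \<times> int) set \<Rightarrow> real"
  assumes mono: "\<And>S T. S \<subseteq> T \<Longrightarrow> m S \<le> m T"
    and additive: "\<And>S T. S \<inter> T = {} \<Longrightarrow> m (S \<union> T) = m S + m T"
    and total: "m (mat_row1 ` GL2Z) = 1"
  shows "1 \<le> (m {r. row_mult r (1, 0, 2, 1) \<in> cone1 \<inter> same_sign} - m (cone1 \<inter> same_sign))
    + (m {r. row_mult r (1, 2, 0, 1) \<in> cone2 \<inter> same_sign} - m (cone2 \<inter> same_sign))
    + (m {r. row_mult r (1, 0, 2, 1) \<in> diag} - m diag)"
proof -
  have "m {} = m ({} \<union> {})"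
    by simp
  then have nonneg: "0 \<le> m S" for S
    using additive[of "{}" "{}"] mono[of "{}" S] by simp
  have add3: "m (A \<union> B \<union> C) = m A + m B + m C" if "A \<inter> B = {}" "(A \<union> B) \<inter> C = {}" for A B C
    using that by (simp add: additive)
  have "mat_row1 ` GL2Z \<subseteq> cone1 \<union> cone2 \<union> diag \<union> antidiag"
    using mat_row1_GL2Z by blast
  then have "1 \<le> m (cone1 \<union> cone2 \<union> diag \<union> antidiag)"
    using total mono by metis
  moreover have "m (cone1 \<union> cone2 \<union> diag \<union> antidiag) = m (cone1 \<union> cone2 \<union> diag) + m antidiag"
    by (rule additive) (auto simp: cone1_def cone2_def diag_def antidiag_def)
  moreover have "m (cone1 \<union> cone2 \<union> diag) = m cone1 + m cone2 + m diag"
    and "m (cone2 \<union> cone1 \<inter> same_sign \<union> diag) = m cone2 + m (cone1 \<inter> same_sign) + m diag"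
    and "m (cone1 \<union> cone2 \<inter> same_sign \<union> diag) = m cone1 + m (cone2 \<inter> same_sign) + m diag"
    by (rule add3; auto simp: cone1_def cone2_def diag_def)+
  moreover have "m (cone2 \<union> cone1 \<inter> same_sign \<union> diag) \<le> m {r. row_mult r (1, 0, 2, 1) \<in> cone1 \<inter> same_sign}"
    and "m (cone1 \<union> cone2 \<inter> same_sign \<union> diag) \<le> m {r. row_mult r (1, 2, 0, 1) \<in> cone2 \<inter> same_sign}"
    and "m antidiag \<le> m {r. row_mult r (1, 0, 2, 1) \<in> diag}"
    by (rule mono; auto simp: row_mult_shears cone1_def cone2_def same_sign_def diag_def antidiag_def abs_if)+
  ultimately show ?thesis
    using nonneg[of diag] by linarith
qed

context amenability_witness
begin

lemma witness_absurd: False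
proof -
  define D where "D G S n = integral\<^sup>L minrot_lborel
    (\<lambda>x. \<bar>row_mean n S (torus_act G x) - row_mean n {r. row_mult r (mat_inv G) \<in> S} x\<bar>)"
    for G S n
  let ?P = "(1, 0, -2, 1) :: imat" and ?Q = "(1, -2, 0, 1) :: imat"
  have inv: "mat_inv ?P = (1, 0, 2, 1)" "mat_inv ?Q = (1, 2, 0, 1)"
    by (simp_all add: mat_inv_def mat_det_def)
  have lower: "1 \<le> D ?P (cone1 \<inter> same_sign) n + D ?Q (cone2 \<inter> same_sign) n + D ?P diag n" for n
  proof -
    have "1 \<le> (integrated_row_mean n {r. row_mult r (1, 0, 2, 1) \<in> cone1 \<inter> same_sign}
          - integrated_row_mean n (cone1 \<inter> same_sign))
        + (integrated_row_mean n {r. row_mult r (1, 2, 0, 1) \<in> cone2 \<inter> same_sign}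
          - integrated_row_mean n (cone2 \<inter> same_sign))
        + (integrated_row_mean n {r. row_mult r (1, 0, 2, 1) \<in> diag} - integrated_row_mean n diag)"
      by (rule mean_shear_defect_ge_1)
         (simp_all add: integrated_row_mean_mono integrated_row_mean_Un integrated_row_mean_eq_1)
    moreover have
      "integrated_row_mean n {r. row_mult r (mat_inv ?P) \<in> cone1 \<inter> same_sign}
        - integrated_row_mean n (cone1 \<inter> same_sign) \<le> D ?P (cone1 \<inter> same_sign) n"
      "integrated_row_mean n {r. row_mult r (mat_inv ?Q) \<in> cone2 \<inter> same_sign}
        - integrated_row_mean n (cone2 \<inter> same_sign) \<le> D ?Q (cone2 \<inter> same_sign) n"
      "integrated_row_mean n {r. row_mult r (mat_inv ?P) \<in> diag} - integrated_row_mean n diag \<le> D ?P diag n"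
      unfolding D_def by (rule integrated_row_mean_shear_le[where c = "-2"]; simp)+
    ultimately show ?thesis
      unfolding inv by linarith
  qed
  have "(\<lambda>n. D ?P (cone1 \<inter> same_sign) n + D ?Q (cone2 \<inter> same_sign) n + D ?P diag n)
      \<longlonglongrightarrow> 0 + 0 + 0"
    unfolding D_def
    by (intro tendsto_add integrated_row_mean_torus_act_tendsto) (simp_all add: shear_GL2Z)
  then have "eventually (\<lambda>n. D ?P (cone1 \<inter> same_sign) n + D ?Q (cone2 \<inter> same_sign) n + D ?P diag n < 1)
      sequentially"
    by (rule order_tendstoD) simp
  then obtain n where "D ?P (cone1 \<inter> same_sign) n + D ?Q (cone2 \<inter> same_sign) n + D ?P diag n < 1"
    using eventually_sequentially by auto
  with lower[of n] show False
    by linarith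
qed

end

lemma not_mu_amenable_minrot_lborel: "\<not> mu_amenable minrot_space minrot_conj minrot_lborel"
proof
  assume "mu_amenable minrot_space minrot_conj minrot_lborel"
  then obtain \<phi> :: "nat \<Rightarrow> (real \<times> real) \<times> (real \<times> real) \<Rightarrow> real" and A where
    "\<forall>n. \<phi> n \<in> borel_measurable (restrict_space (minrot_space \<Otimes>\<^sub>M minrot_space) minrot_conj)"
    "\<forall>n p. p \<in> minrot_conj \<longrightarrow> 0 \<le> \<phi> n p"
    "\<forall>n. \<forall>x\<in>space minrot_space. ((\<lambda>y. \<phi> n (x, y)) has_sum 1) {y. (x, y) \<in> minrot_conj}"
    "A \<in> sets minrot_space" "\<forall>x y. (x, y) \<in> minrot_conj \<longrightarrow> (x \<in> A \<longleftrightarrow> y \<in> A)"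
    "emeasure minrot_lborel A = 1"
    "\<forall>x x'. (x, x') \<in> minrot_conj \<and> x \<in> A \<and> x' \<in> A \<longrightarrow>
       (\<lambda>n. infsum (\<lambda>y. \<bar>\<phi> n (x, y) - \<phi> n (x', y)\<bar>) {y. (x, y) \<in> minrot_conj}) \<longlonglongrightarrow> 0"
    unfolding mu_amenable_def by blast
  then interpret amenability_witness \<phi> A
    by unfold_locales (auto simp: space_minrot_space)
  show False
    by (rule witness_absurd)
qed

theorem theorem1p2:
  shows "\<not> amenable_rel minrot_space minrot_conj"
  using not_mu_amenable_minrot_lborel sets_minrot_lborel prob_space_minrot_lborel
  by (auto simp: amenable_rel_def)

end
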